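(* Let $a_{4,0},a_{2,2},a_{0,4}\geqslant0$ with $a_{4,0}+a_{2,2}>0$, $a_{2,2}+a_{0,4}>0$, let $t\in\mathbb{R}$ and $W_t(x,y)=e^{-(a_{4,0}x^4+a_{2,2}x^2y^2+a_{0,4}y^4)+t(x^2+y^2)}$. Let $\{\mathbb{Q}_n(t)\}_{n\geqslant0}$ be the monic orthogonal polynomial system for $W_t$, with $H_n(t)$ and $E_{n,i}(t)$ as in the context. Then for $n\geqslant0$, $$\dot H_n(t)=V_{n+1}(t)H_n(t),$$ where $V_{n+1}(t)=L_{n,1}E_{n+1,1}(t)+L_{n,2}E_{n+1,2}(t)+E_{n,1}(t)L_{n-1,1}+E_{n,2}(t)L_{n-1,2}$ and the dot denotes derivative with respect to $t$.
   Context: $\mathbb{X}_n=(x^n,x^{n-1}y,\dots,y^n)^T$. $L_{n,1}=(I_{n+1}\,|\,0)$ and $L_{n,2}=(0\,|\,I_{n+1})$ are $(n+1)\times(n+2)$ matrices. Inner product $(f,g)_t=\iint_{\mathbb{R}^2}fgW_t\,dx\,dy$, applied entrywise to vectors. The monic orthogonal polynomial system is the sequence of column vectors $\mathbb{Q}_n(t)=\mathbb{X}_n+(\text{vector of polynomials of total degree}<n)$, coefficients depending on $t$, with $(\mathbb{Q}_n(t),\mathbb{Q}_m(t)^T)_t=0$ for $m\neq n$ and $H_n(t):=(\mathbb{Q}_n(t),\mathbb{Q}_n(t)^T)_t$ symmetric positive definite. It satisfies, for $n\geqslant0$, $x\mathbb{Q}_n(t)=L_{n,1}\mathbb{Q}_{n+1}(t)+E_{n,1}(t)\mathbb{Q}_{n-1}(t)$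 and $y\mathbb{Q}_n(t)=L_{n,2}\mathbb{Q}_{n+1}(t)+E_{n,2}(t)\mathbb{Q}_{n-1}(t)$, with $\mathbb{Q}_{-1}=0$, $\mathbb{Q}_0=1$, $E_{n,i}(t)$ of size $(n+1)\times n$ (the terms with $E_{0,i}$ are zero). *)

theory Defs
  imports "HOL-Analysis.Analysis" "Jordan_Normal_Form.Matrix"
begin

definition W :: "real \<Rightarrow> real \<Rightarrow> real \<Rightarrow> real \<Rightarrow> real \<Rightarrow> real \<Rightarrow> real" where
  "W a40 a22 a04 t x y = exp (- (a40 * x^4 + a22 * x^2 * y^2 + a04 * y^4) + t * (x^2 + y^2))"

definition ip :: "real \<Rightarrow> real \<Rightarrow> real \<Rightarrow> real \<Rightarrow> (real \<Rightarrow> real \<Rightarrow> real)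
                  \<Rightarrow> (real \<Rightarrow> real \<Rightarrow> real) \<Rightarrow> real" where
  "ip a40 a22 a04 t f g =
     integral\<^sup>L (lborel :: (real \<times> real) measure) (\<lambda>(x, y). f x y * g x y * W a40 a22 a04 t x y)"

definition ip_defined :: "real \<Rightarrow> real \<Rightarrow> real \<Rightarrow> real \<Rightarrow> (real \<Rightarrow> real \<Rightarrow> real)
                  \<Rightarrow> (real \<Rightarrow> real \<Rightarrow> real) \<Rightarrow> bool" where
  "ip_defined a40 a22 a04 t f g =
     integrable (lborel :: (real \<times> real) measure) (\<lambda>(x, y). f x y * g x y * W a40 a22 a04 t x y)"

text \<open>A vector polynomial system: P n i (i = 0..n) is the i-th component of the column
  vector P_n, which equals X_n = (x^n, x^(n-1) y, ..., y^n)^T plus polynomials of total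
  degree < n.\<close>
definition monic_vec :: "nat \<Rightarrow> (nat \<Rightarrow> real \<Rightarrow> real \<Rightarrow> real) \<Rightarrow> bool" where
  "monic_vec n P \<longleftrightarrow> (\<exists>c :: nat \<Rightarrow> nat \<Rightarrow> nat \<Rightarrow> real. \<forall>i\<le>n. \<forall>x y.
      P i x y = x ^ (n - i) * y ^ i +
        (\<Sum>j\<le>n. \<Sum>k\<le>n. if j + k < n then c i j k * x ^ j * y ^ k else 0))"

definition Hmat :: "real \<Rightarrow> real \<Rightarrow> real \<Rightarrow> real \<Rightarrow> (nat \<Rightarrow> nat \<Rightarrow> real \<Rightarrow> real \<Rightarrow> real)
                     \<Rightarrow> nat \<Rightarrow> real mat" where
  "Hmat a40 a22 a04 t P n = mat (Suc n) (Suc n) (\<lambda>(i, j). ip a40 a22 a04 t (P n i) (P n j))"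

definition sym_pos_def :: "real mat \<Rightarrow> bool" where
  "sym_pos_def A \<longleftrightarrow> A \<in> carrier_mat (dim_row A) (dim_row A) \<and> A\<^sup>T = A \<and>
     (\<forall>v \<in> carrier_vec (dim_row A). v \<noteq> 0\<^sub>v (dim_row A) \<longrightarrow> v \<bullet> (A *\<^sub>v v) > 0)"

definition monic_OPS :: "real \<Rightarrow> real \<Rightarrow> real \<Rightarrow> real \<Rightarrow> (nat \<Rightarrow> nat \<Rightarrow> real \<Rightarrow> real \<Rightarrow> real) \<Rightarrow> bool" where
  "monic_OPS a40 a22 a04 t P \<longleftrightarrow>
     (\<forall>n. monic_vec n (P n)) \<and>
     (\<forall>n m i j. i \<le> n \<longrightarrow> j \<le> m \<longrightarrow> ip_defined a40 a22 a04 t (P n i) (P m j)) \<and>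
     (\<forall>n m i j. n \<noteq> m \<longrightarrow> i \<le> n \<longrightarrow> j \<le> m \<longrightarrow> ip a40 a22 a04 t (P n i) (P m j) = 0) \<and>
     (\<forall>n. sym_pos_def (Hmat a40 a22 a04 t P n))"

text \<open>Lmat r k: for r = n+1 this is L_{n,k} ((n+1) x (n+2)); k = 1 gives (I | 0), k = 2 gives (0 | I).
  Lmat 0 k is the empty 0 x 1 matrix (L_{-1,k}).\<close>
definition Lmat :: "nat \<Rightarrow> nat \<Rightarrow> real mat" where
  "Lmat r k = mat r (Suc r) (\<lambda>(i, j). if (k = 1 \<and> j = i) \<or> (k = 2 \<and> j = Suc i) then 1 else 0)"

text \<open>Three-term relations: x Q_n = L_{n,1} Q_{n+1} + E_{n,1} Q_{n-1},
  y Q_n = L_{n,2} Q_{n+1} + E_{n,2} Q_{n-1}, written componentwise, with E n k of size (n+1) x n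
  (so the E-term vanishes for n = 0).\<close>
definition three_term :: "(nat \<Rightarrow> nat \<Rightarrow> real \<Rightarrow> real \<Rightarrow> real) \<Rightarrow> (nat \<Rightarrow> nat \<Rightarrow> real mat) \<Rightarrow> bool" where
  "three_term P E \<longleftrightarrow>
     (\<forall>n k. (k = 1 \<or> k = 2) \<longrightarrow> E n k \<in> carrier_mat (Suc n) n) \<and>
     (\<forall>n i x y. i \<le> n \<longrightarrow>
        x * P n i x y = (\<Sum>j\<le>Suc n. Lmat (Suc n) 1 $$ (i, j) * P (Suc n) j x y)
                        + (\<Sum>j<n. E n 1 $$ (i, j) * P (n - 1) j x y)) \<and>
     (\<forall>n i x y. i \<le> n \<longrightarrow>
        y * P n i x y = (\<Sum>j\<le>Suc n. Lmat (Suc n) 2 $$ (i, j) * P (Suc n) j x y)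
                        + (\<Sum>j<n. E n 2 $$ (i, j) * P (n - 1) j x y))"

definition Vmat :: "(nat \<Rightarrow> nat \<Rightarrow> real mat) \<Rightarrow> nat \<Rightarrow> real mat" where
  "Vmat E n = Lmat (Suc n) 1 * E (Suc n) 1 + Lmat (Suc n) 2 * E (Suc n) 2
              + E n 1 * Lmat n 1 + E n 2 * Lmat n 2"

end

theory Submission
  imports Defs
begin

text \<open>
  Write \<open>Q\<^sub>n(t) = Q\<^sub>n(s) + \<alpha>\<close> componentwise, where \<open>\<alpha>\<close> has degree \<open>< n\<close>. By orthogonality,
  \<open>H\<^sub>n(s) = (Q\<^sub>n(t), Q\<^sub>n(t)\<^sup>T)\<^sub>s - (\<alpha>, \<alpha>\<^sup>T)\<^sub>s\<close>. Since \<open>\<partial>\<^sub>t W\<^sub>t = (x\<^sup>2 + y\<^sup>2) W\<^sub>t\<close>, the first term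
  is differentiable at \<open>s = t\<close> with derivative \<open>((x\<^sup>2 + y\<^sup>2) Q\<^sub>n(t), Q\<^sub>n(t)\<^sup>T)\<^sub>t\<close>, while the
  second is \<open>O((s - t)\<^sup>2)\<close>: orthogonality gives \<open>(\<alpha>, \<alpha>)\<^sub>s = (Q\<^sub>n(t), \<alpha>)\<^sub>s - (Q\<^sub>n(t), \<alpha>)\<^sub>t\<close>,
  and AM-GM bounds this by \<open>(\<alpha>, \<alpha>)\<^sub>s / 2 + O((s - t)\<^sup>2)\<close>. Finally
  \<open>(x\<^sup>2 + y\<^sup>2) Q\<^sub>n = x (x Q\<^sub>n) + y (y Q\<^sub>n)\<close>, and applying the three-term relations to both
  factors turns the derivative into \<open>V\<^sub>n\<^sub>+\<^sub>1 H\<^sub>n\<close>.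

  Integrability of every polynomial against \<open>W\<^sub>s\<close> is not proved analytically: the three-term
  relations express each polynomial as a combination of the \<open>Q\<^sub>k(s)\<close>, whose products are
  integrable by hypothesis.
\<close>

lemma has_real_derivative_if_quadratic_remainder:
  fixes F :: "real \<Rightarrow> real"
  assumes "\<delta> > 0"
    and remainder: "\<And>s. \<bar>s - t\<bar> \<le> \<delta> \<Longrightarrow> \<bar>F s - F t - (s - t) * D\<bar> \<le> C * (s - t)^2"
  shows "(F has_real_derivative D) (at t)"
proof -
  have "\<forall>\<^sub>F s in at t. norm ((F s - F t) / (s - t) - D) \<le> \<bar>C\<bar> * \<bar>s - t\<bar>"
    unfolding eventually_at
  proof (intro exI[of _ \<delta>] conjI ballI impI)
    fix s assume "s \<noteq> t \<and> dist s t < \<delta>"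
    then have ne: "s - t \<noteq> 0" and le: "\<bar>s - t\<bar> \<le> \<delta>" by (auto simp: dist_real_def)
    have "norm ((F s - F t) / (s - t) - D) = \<bar>F s - F t - (s - t) * D\<bar> / \<bar>s - t\<bar>"
      using ne by (simp add: field_simps flip: abs_divide)
    also have "\<dots> \<le> C * (s - t)^2 / \<bar>s - t\<bar>"
      using remainder[OF le] by (simp add: divide_right_mono)
    also have "\<dots> = C * \<bar>s - t\<bar>"
      using ne by (simp add: power2_eq_square field_simps abs_mult_self_eq)
    also have "\<dots> \<le> \<bar>C\<bar> * \<bar>s - t\<bar>" by (simp add: mult_right_mono)
    finally show "norm ((F s - F t) / (s - t) - D) \<le> \<bar>C\<bar> * \<bar>s - t\<bar>" .
  qed (use assms in auto)
  moreover have "((\<lambda>s. \<bar>C\<bar> * \<bar>s - t\<bar>) \<longlongrightarrow> 0) (at t)"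
    by (auto intro!: tendsto_eq_intros)
  ultimately have "((\<lambda>s. (F s - F t) / (s - t) - D) \<longlongrightarrow> 0) (at t)"
    by (rule Lim_null_comparison)
  then show ?thesis by (simp add: has_field_derivative_iff LIM_zero_iff)
qed

lemma abs_mult_le_weighted_squares:
  fixes p q d w :: real
  assumes "w > 0"
  shows "\<bar>p * q * d\<bar> \<le> (q^2 * w + p^2 * d^2 / w) / 2"
proof -
  have "2 * \<bar>p * q * d\<bar> * w \<le> q^2 * w^2 + p^2 * d^2"
    using sum_squares_bound[of "\<bar>q\<bar> * w" "\<bar>p * d\<bar>"] assms
    by (simp add: power2_eq_square abs_mult algebra_simps)
  then show ?thesis using assms by (simp add: field_simps power2_eq_square)
qed

lemma exp_minus_one_sq_div_exp_le: "(exp z - 1)^2 / exp z \<le> z^2 * exp \<bar>z\<bar>" for z :: real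
proof (cases "z \<ge> 0")
  case True
  have "1 - z \<le> exp (- z)" using exp_ge_add_one_self[of "- z"] by simp
  then have "exp z - 1 \<le> z * exp z" by (simp add: exp_minus field_simps)
  then have "(exp z - 1)^2 \<le> (z * exp z)^2" using True by (intro power_mono) auto
  then show ?thesis using True by (simp add: power2_eq_square field_simps)
next
  case False
  have "1 - exp z \<le> - z" using exp_ge_add_one_self[of z] by linarith
  then have "(1 - exp z)^2 \<le> (- z)^2" using False by (intro power_mono) auto
  then have "(exp z - 1)^2 \<le> z^2 * exp \<bar>z\<bar> * exp z"
    using False by (simp add: exp_minus power2_commute field_simps)
  then show ?thesis by (simp add: divide_le_eq)
qed

lemma abs_exp_minus_one_minus_le: "\<bar>exp z - 1 - z\<bar> \<le> z^2 * exp \<bar>z\<bar>" for z :: real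
proof -
  have "1 - z \<le> exp (- z)" using exp_ge_add_one_self[of "- z"] by simp
  then have "exp z - 1 \<le> z * exp z" by (simp add: exp_minus field_simps)
  have "exp z - 1 - z \<le> z^2 * exp \<bar>z\<bar>"
  proof (cases "z \<ge> 0")
    case True
    have "exp z - 1 - z \<le> z * (exp z - 1)"
      using \<open>exp z - 1 \<le> z * exp z\<close> by (simp add: algebra_simps)
    also have "\<dots> \<le> z * (z * exp z)" using \<open>exp z - 1 \<le> z * exp z\<close> True by (rule mult_left_mono)
    also have "\<dots> = z^2 * exp \<bar>z\<bar>" using True by (simp add: power2_eq_square)
    finally show ?thesis .
  next
    case False
    have "exp z - 1 - z \<le> (- z) * (1 - exp z)"
      using \<open>exp z - 1 \<le> z * exp z\<close> by (simp add: algebra_simps)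
    also have "\<dots> \<le> (- z) * (- z)"
      using False exp_ge_add_one_self[of z] by (intro mult_left_mono) linarith+
    also have "\<dots> \<le> z^2 * exp \<bar>z\<bar>"
      using mult_left_mono[of 1 "exp \<bar>z\<bar>" "z^2"] by (simp add: power2_eq_square)
    finally show ?thesis .
  qed
  moreover have "0 \<le> exp z - 1 - z" using exp_ge_add_one_self[of z] by linarith
  ultimately show ?thesis by simp
qed

section \<open>The weight and its inner product\<close>

lemma W_pos: "0 < W a b c t x y"
  by (simp add: W_def)

lemma W_eq_mult_exp: "W a b c s x y = W a b c t x y * exp ((s - t) * (x^2 + y^2))"
  unfolding W_def by (simp add: algebra_simps flip: exp_add)

lemma W_mult_exp_abs_le:
  assumes "\<bar>s - t\<bar> \<le> \<delta>"
  shows "W a b c t x y * exp \<bar>(s - t) * (x^2 + y^2)\<bar> \<le> W a b c (t + \<delta>) x y"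
proof -
  have "\<bar>(s - t) * (x^2 + y^2)\<bar> \<le> \<delta> * (x^2 + y^2)"
    using assms by (simp add: abs_mult mult_right_mono)
  then show ?thesis
    using W_eq_mult_exp[of a b c "t + \<delta>" x y t] W_pos[of a b c t x y] by simp
qed

lemma W_diff_sq_div_le:
  assumes "\<bar>s - t\<bar> \<le> \<delta>"
  shows "(W a b c s x y - W a b c t x y)^2 / W a b c s x y
    \<le> (s - t)^2 * (x^2 + y^2)^2 * W a b c (t + \<delta>) x y"
proof -
  define u where "u = (s - t) * (x^2 + y^2)"
  define w where "w = W a b c t x y"
  have "w > 0" by (simp add: w_def W_pos)
  have "(W a b c s x y - W a b c t x y)^2 / W a b c s x y = w * ((exp u - 1)^2 / exp u)"
    unfolding W_eq_mult_exp[of a b c s x y t] u_def[symmetric] w_def[symmetric]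
    using \<open>w > 0\<close> by (simp add: power2_eq_square field_simps)
  also have "\<dots> \<le> w * (u^2 * exp \<bar>u\<bar>)"
    using \<open>w > 0\<close> exp_minus_one_sq_div_exp_le by (intro mult_left_mono) auto
  also have "\<dots> \<le> u^2 * W a b c (t + \<delta>) x y"
    using mult_left_mono[OF W_mult_exp_abs_le[OF assms, of a b c x y], of "u^2"]
    by (simp add: u_def w_def mult_ac)
  finally show ?thesis by (simp add: u_def power_mult_distrib)
qed

lemma W_taylor_le:
  assumes "\<bar>s - t\<bar> \<le> \<delta>"
  shows "\<bar>W a b c s x y - W a b c t x y - (s - t) * (x^2 + y^2) * W a b c t x y\<bar>
    \<le> (s - t)^2 * (x^2 + y^2)^2 * W a b c (t + \<delta>) x y"
proof -
  define u where "u = (s - t) * (x^2 + y^2)"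
  define w where "w = W a b c t x y"
  have "w > 0" by (simp add: w_def W_pos)
  have "W a b c s x y - W a b c t x y - (s - t) * (x^2 + y^2) * W a b c t x y
      = w * (exp u - 1 - u)"
    unfolding W_eq_mult_exp[of a b c s x y t] by (simp add: u_def w_def algebra_simps)
  then have "\<bar>W a b c s x y - W a b c t x y - (s - t) * (x^2 + y^2) * W a b c t x y\<bar>
      = w * \<bar>exp u - 1 - u\<bar>"
    using \<open>w > 0\<close> by (simp add: abs_mult)
  also have "\<dots> \<le> w * (u^2 * exp \<bar>u\<bar>)"
    using \<open>w > 0\<close> abs_exp_minus_one_minus_le by (intro mult_left_mono) auto
  also have "\<dots> \<le> u^2 * W a b c (t + \<delta>) x y"
    using mult_left_mono[OF W_mult_exp_abs_le[OF assms, of a b c x y], of "u^2"]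
    by (simp add: u_def w_def mult_ac)
  finally show ?thesis by (simp add: u_def power_mult_distrib)
qed

lemma has_bochner_integral_abs_le:
  fixes f g :: "real \<times> real \<Rightarrow> real"
  assumes "has_bochner_integral M f I" "has_bochner_integral M g J" "\<And>x y. \<bar>f (x, y)\<bar> \<le> g (x, y)"
  shows "\<bar>I\<bar> \<le> J"
proof -
  have "\<bar>integral\<^sup>L M f\<bar> \<le> integral\<^sup>L M g"
    using assms by (intro integral_abs_bound_integral) (auto simp: has_bochner_integral_iff split_paired_all)
  then show ?thesis using assms by (simp add: has_bochner_integral_iff)
qed

lemma has_bochner_integral_ip:
  "ip_defined a b c s f g \<Longrightarrow>
    has_bochner_integral lborel (\<lambda>(x, y). f x y * g x y * W a b c s x y) (ip a b c s f g)"
  by (simp add: ip_defined_def ip_def has_bochner_integral_iff)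

lemma ip_commute: "ip a b c s f g = ip a b c s g f"
  unfolding ip_def by (simp add: mult.commute)

lemma ip_defined_commute: "ip_defined a b c s f g = ip_defined a b c s g f"
  unfolding ip_defined_def by (simp add: mult.commute)

lemma ip_mult_swap: "ip a b c s (\<lambda>x y. m x y * f x y) g = ip a b c s f (\<lambda>x y. m x y * g x y)"
  unfolding ip_def by (simp add: mult_ac)

lemma ip_zero_left: "ip_defined a b c s (\<lambda>x y. 0) g" "ip a b c s (\<lambda>x y. 0) g = 0"
proof -
  have "(\<lambda>(x, y). 0 * g x y * W a b c s x y) = (\<lambda>_. 0 :: real)" by auto
  then show "ip_defined a b c s (\<lambda>x y. 0) g" "ip a b c s (\<lambda>x y. 0) g = 0"
    by (simp_all add: ip_defined_def ip_def)
qed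

lemma ip_add_left:
  assumes "ip_defined a b c s f h" "ip_defined a b c s g h"
  shows "ip_defined a b c s (\<lambda>x y. f x y + g x y) h"
    and "ip a b c s (\<lambda>x y. f x y + g x y) h = ip a b c s f h + ip a b c s g h"
proof -
  have "has_bochner_integral lborel (\<lambda>(x, y). (f x y + g x y) * h x y * W a b c s x y)
      (ip a b c s f h + ip a b c s g h)"
    using has_bochner_integral_add[OF assms[THEN has_bochner_integral_ip]]
    by (simp add: case_prod_beta' distrib_right)
  then show "ip_defined a b c s (\<lambda>x y. f x y + g x y) h"
    and "ip a b c s (\<lambda>x y. f x y + g x y) h = ip a b c s f h + ip a b c s g h"
    by (simp_all add: has_bochner_integral_iff ip_defined_def ip_def)
qed

lemma ip_cmult_left:
  assumes "ip_defined a b c s f h"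
  shows "ip_defined a b c s (\<lambda>x y. k * f x y) h"
    and "ip a b c s (\<lambda>x y. k * f x y) h = k * ip a b c s f h"
proof -
  have "has_bochner_integral lborel (\<lambda>(x, y). (k * f x y) * h x y * W a b c s x y) (k * ip a b c s f h)"
    using has_bochner_integral_mult_right[of k, OF has_bochner_integral_ip[OF assms]]
    by (simp add: case_prod_beta' mult.assoc)
  then show "ip_defined a b c s (\<lambda>x y. k * f x y) h"
    and "ip a b c s (\<lambda>x y. k * f x y) h = k * ip a b c s f h"
    by (simp_all add: has_bochner_integral_iff ip_defined_def ip_def)
qed

lemma ip_lincomb_left:
  assumes "\<And>l. l \<in> S \<Longrightarrow> ip_defined a b c s (f l) g"
  shows "ip_defined a b c s (\<lambda>x y. \<Sum>l\<in>S. k l * f l x y) g"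
    and "ip a b c s (\<lambda>x y. \<Sum>l\<in>S. k l * f l x y) g = (\<Sum>l\<in>S. k l * ip a b c s (f l) g)"
proof -
  have "ip_defined a b c s (\<lambda>x y. \<Sum>l\<in>S. k l * f l x y) g \<and>
    ip a b c s (\<lambda>x y. \<Sum>l\<in>S. k l * f l x y) g = (\<Sum>l\<in>S. k l * ip a b c s (f l) g)"
    using assms
  proof (induction S rule: infinite_finite_induct)
    case (insert l S)
    then show ?case by (simp add: ip_add_left ip_cmult_left)
  qed (simp_all add: ip_zero_left)
  then show "ip_defined a b c s (\<lambda>x y. \<Sum>l\<in>S. k l * f l x y) g"
    and "ip a b c s (\<lambda>x y. \<Sum>l\<in>S. k l * f l x y) g = (\<Sum>l\<in>S. k l * ip a b c s (f l) g)"
    by simp_all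
qed

lemma ip_add_add:
  assumes "ip_defined a b c s f h" "ip_defined a b c s g h" "ip_defined a b c s f k" "ip_defined a b c s g k"
  shows "ip a b c s (\<lambda>x y. f x y + g x y) (\<lambda>x y. h x y + k x y)
    = ip a b c s f h + ip a b c s g h + ip a b c s f k + ip a b c s g k"
proof -
  have "has_bochner_integral lborel (\<lambda>(x, y). (f x y + g x y) * (h x y + k x y) * W a b c s x y)
      (ip a b c s f h + ip a b c s g h + ip a b c s f k + ip a b c s g k)"
    using has_bochner_integral_add[OF has_bochner_integral_add[OF has_bochner_integral_add]]
      assms[THEN has_bochner_integral_ip]
    by (simp add: case_prod_beta' algebra_simps)
  then show ?thesis by (simp add: has_bochner_integral_iff ip_def)
qed

lemma ip_add_lincombs_left:
  assumes "\<And>l. l \<in> S \<Longrightarrow> ip_defined a b c s (f l) h" "\<And>l. l \<in> T \<Longrightarrow> ip_defined a b c s (g l) h"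
  shows "ip a b c s (\<lambda>x y. (\<Sum>l\<in>S. p l * f l x y) + (\<Sum>l\<in>T. q l * g l x y)) h
    = (\<Sum>l\<in>S. p l * ip a b c s (f l) h) + (\<Sum>l\<in>T. q l * ip a b c s (g l) h)"
  using assms by (simp add: ip_add_left ip_lincomb_left)

lemma abs_ip_le:
  assumes "ip_defined a b c s f g" "ip_defined a b c s f f" "ip_defined a b c s g g"
  shows "\<bar>ip a b c s f g\<bar> \<le> (ip a b c s f f + ip a b c s g g) / 2"
proof -
  have "has_bochner_integral lborel
      (\<lambda>p. 1/2 * (\<lambda>(x, y). f x y * f x y * W a b c s x y) p + 1/2 * (\<lambda>(x, y). g x y * g x y * W a b c s x y) p)
      (1/2 * ip a b c s f f + 1/2 * ip a b c s g g)"
    using assms by (intro has_bochner_integral_add has_bochner_integral_mult_right has_bochner_integral_ip)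
  moreover have "\<bar>f x y * g x y * W a b c s x y\<bar>
      \<le> 1/2 * (f x y * f x y * W a b c s x y) + 1/2 * (g x y * g x y * W a b c s x y)" for x y
    using abs_mult_le_weighted_squares[where p = "f x y" and q = "g x y" and d = "W a b c s x y"
        and w = "W a b c s x y"] W_pos[of a b c s x y]
    by (simp add: power2_eq_square field_simps)
  ultimately show ?thesis
    using has_bochner_integral_ip[OF assms(1)] by (auto dest: has_bochner_integral_abs_le)
qed

lemma ip_taylor_le:
  fixes A B :: "real \<Rightarrow> real \<Rightarrow> real"
  defines "rA \<equiv> \<lambda>x y. A x y * (x^2 + y^2)" and "rB \<equiv> \<lambda>x y. B x y * (x^2 + y^2)"
  assumes "\<bar>s - t\<bar> \<le> \<delta>"
    and "ip_defined a b c s A B" "ip_defined a b c t A B" "ip_defined a b c t rA B"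
    and "ip_defined a b c (t + \<delta>) rA rA" "ip_defined a b c (t + \<delta>) rB rB"
  shows "\<bar>ip a b c s A B - ip a b c t A B - (s - t) * ip a b c t rA B\<bar>
    \<le> (s - t)^2 / 2 * (ip a b c (t + \<delta>) rA rA + ip a b c (t + \<delta>) rB rB)"
proof -
  let ?K = "\<lambda>s f g. \<lambda>(x, y). f x y * g x y * W a b c s x y"
  have I: "has_bochner_integral lborel (\<lambda>p. ?K s A B p - ?K t A B p - (s - t) * ?K t rA B p)
      (ip a b c s A B - ip a b c t A B - (s - t) * ip a b c t rA B)"
    using assms by (intro has_bochner_integral_diff has_bochner_integral_mult_right has_bochner_integral_ip)
  have J: "has_bochner_integral lborel
      (\<lambda>p. (s - t)^2 / 2 * ?K (t + \<delta>) rA rA p + (s - t)^2 / 2 * ?K (t + \<delta>) rB rB p)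
      ((s - t)^2 / 2 * ip a b c (t + \<delta>) rA rA + (s - t)^2 / 2 * ip a b c (t + \<delta>) rB rB)"
    using assms by (intro has_bochner_integral_add has_bochner_integral_mult_right has_bochner_integral_ip)
  have pointwise: "\<bar>A x y * B x y * W a b c s x y - A x y * B x y * W a b c t x y
        - (s - t) * (rA x y * B x y * W a b c t x y)\<bar>
      \<le> (s - t)^2 / 2 * (rA x y * rA x y * W a b c (t + \<delta>) x y)
        + (s - t)^2 / 2 * (rB x y * rB x y * W a b c (t + \<delta>) x y)" for x y
  proof -
    define r where "r = x^2 + y^2"
    have AB: "\<bar>A x y * B x y\<bar> \<le> ((A x y)^2 + (B x y)^2) / 2"
      using abs_mult_le_weighted_squares[where p = "A x y" and q = "B x y" and d = 1 and w = 1]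
      by (simp add: add.commute)
    have "\<bar>A x y * B x y * W a b c s x y - A x y * B x y * W a b c t x y
          - (s - t) * (rA x y * B x y * W a b c t x y)\<bar>
        = \<bar>A x y * B x y\<bar> * \<bar>W a b c s x y - W a b c t x y - (s - t) * r * W a b c t x y\<bar>"
      by (simp add: rA_def r_def algebra_simps flip: abs_mult)
    also have "\<dots> \<le> ((A x y)^2 + (B x y)^2) / 2 * ((s - t)^2 * r^2 * W a b c (t + \<delta>) x y)"
      using AB W_taylor_le[OF assms(3), of a b c x y] W_pos[of a b c "t + \<delta>" x y]
      by (intro mult_mono) (auto simp: r_def)
    also have "\<dots> = (s - t)^2 / 2 * (rA x y * rA x y * W a b c (t + \<delta>) x y)
        + (s - t)^2 / 2 * (rB x y * rB x y * W a b c (t + \<delta>) x y)"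
      by (simp add: rA_def rB_def r_def power2_eq_square field_simps)
    finally show ?thesis .
  qed
  have "\<bar>ip a b c s A B - ip a b c t A B - (s - t) * ip a b c t rA B\<bar>
      \<le> (s - t)^2 / 2 * ip a b c (t + \<delta>) rA rA + (s - t)^2 / 2 * ip a b c (t + \<delta>) rB rB"
    by (rule has_bochner_integral_abs_le[OF I J]) (simp only: prod.case, rule pointwise)
  then show ?thesis by (simp only: distrib_left)
qed

lemma ip_self_le_of_orth:
  fixes A \<alpha> :: "real \<Rightarrow> real \<Rightarrow> real"
  defines "rA \<equiv> \<lambda>x y. A x y * (x^2 + y^2)"
  assumes "\<bar>s - t\<bar> \<le> \<delta>"
    and "ip_defined a b c s \<alpha> \<alpha>" "ip_defined a b c s A \<alpha>" "ip_defined a b c t A \<alpha>"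
    and "ip_defined a b c (t + \<delta>) rA rA"
    and "ip a b c s A \<alpha> = ip a b c s \<alpha> \<alpha>" "ip a b c t A \<alpha> = 0"
  shows "ip a b c s \<alpha> \<alpha> \<le> (s - t)^2 * ip a b c (t + \<delta>) rA rA"
proof -
  let ?K = "\<lambda>s f g. \<lambda>(x, y). f x y * g x y * W a b c s x y"
  have I: "has_bochner_integral lborel (\<lambda>p. ?K s A \<alpha> p - ?K t A \<alpha> p) (ip a b c s A \<alpha> - ip a b c t A \<alpha>)"
    using assms by (intro has_bochner_integral_diff has_bochner_integral_ip)
  have J: "has_bochner_integral lborel
      (\<lambda>p. 1 / 2 * ?K s \<alpha> \<alpha> p + (s - t)^2 / 2 * ?K (t + \<delta>) rA rA p)
      (1 / 2 * ip a b c s \<alpha> \<alpha> + (s - t)^2 / 2 * ip a b c (t + \<delta>) rA rA)"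
    using assms by (intro has_bochner_integral_add has_bochner_integral_mult_right has_bochner_integral_ip)
  have pointwise: "\<bar>A x y * \<alpha> x y * W a b c s x y - A x y * \<alpha> x y * W a b c t x y\<bar>
      \<le> 1 / 2 * (\<alpha> x y * \<alpha> x y * W a b c s x y)
        + (s - t)^2 / 2 * (rA x y * rA x y * W a b c (t + \<delta>) x y)" for x y
  proof -
    define ws where "ws = W a b c s x y"
    define wt where "wt = W a b c t x y"
    have "ws > 0" by (simp add: ws_def W_pos)
    have "\<bar>A x y * \<alpha> x y * W a b c s x y - A x y * \<alpha> x y * W a b c t x y\<bar>
        = \<bar>A x y * \<alpha> x y * (ws - wt)\<bar>"
      by (simp add: ws_def wt_def algebra_simps)
    also have "\<dots> \<le> ((\<alpha> x y)^2 * ws + (A x y)^2 * ((ws - wt)^2 / ws)) / 2"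
      using abs_mult_le_weighted_squares[OF \<open>ws > 0\<close>, where p = "A x y" and q = "\<alpha> x y" and d = "ws - wt"]
      by simp
    also have "\<dots> \<le> ((\<alpha> x y)^2 * ws
        + (A x y)^2 * ((s - t)^2 * (x^2 + y^2)^2 * W a b c (t + \<delta>) x y)) / 2"
      using W_diff_sq_div_le[OF assms(2), of a b c x y]
      by (intro divide_right_mono add_left_mono mult_left_mono) (auto simp: ws_def wt_def)
    also have "\<dots> = 1 / 2 * (\<alpha> x y * \<alpha> x y * W a b c s x y)
        + (s - t)^2 / 2 * (rA x y * rA x y * W a b c (t + \<delta>) x y)"
      by (simp add: ws_def rA_def power2_eq_square field_simps)
    finally show ?thesis .
  qed
  have "\<bar>ip a b c s A \<alpha> - ip a b c t A \<alpha>\<bar>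
      \<le> 1 / 2 * ip a b c s \<alpha> \<alpha> + (s - t)^2 / 2 * ip a b c (t + \<delta>) rA rA"
    by (rule has_bochner_integral_abs_le[OF I J]) (simp only: prod.case, rule pointwise)
  then show ?thesis using assms(7,8) by simp
qed

section \<open>Polynomials of bounded total degree\<close>

inductive poly_deg_lt :: "nat \<Rightarrow> (real \<Rightarrow> real \<Rightarrow> real) \<Rightarrow> bool" where
  monomial: "i + j < m \<Longrightarrow> poly_deg_lt m (\<lambda>x y. c * x ^ i * y ^ j)"
| zero: "poly_deg_lt m (\<lambda>x y. 0)"
| add: "poly_deg_lt m f \<Longrightarrow> poly_deg_lt m g \<Longrightarrow> poly_deg_lt m (\<lambda>x y. f x y + g x y)"

lemma poly_deg_lt_cmult: "poly_deg_lt m f \<Longrightarrow> poly_deg_lt m (\<lambda>x y. k * f x y)"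
proof (induction rule: poly_deg_lt.induct)
  case (monomial i j m c)
  then show ?case using poly_deg_lt.monomial[of i j m "k * c"] by (simp add: mult.assoc)
next
  case (add m f g)
  then show ?case using poly_deg_lt.add[of m "\<lambda>x y. k * f x y" "\<lambda>x y. k * g x y"]
    by (simp add: distrib_left)
qed (simp add: poly_deg_lt.zero)

lemma poly_deg_lt_diff:
  "poly_deg_lt m f \<Longrightarrow> poly_deg_lt m g \<Longrightarrow> poly_deg_lt m (\<lambda>x y. f x y - g x y)"
  using poly_deg_lt.add[of m f "\<lambda>x y. (-1) * g x y"] poly_deg_lt_cmult[of m g "-1"] by simp

lemma poly_deg_lt_mono: "poly_deg_lt m f \<Longrightarrow> m \<le> m' \<Longrightarrow> poly_deg_lt m' f"
  by (induction rule: poly_deg_lt.induct) (auto intro: poly_deg_lt.intros)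

lemma poly_deg_lt_sum:
  "(\<And>l. l \<in> S \<Longrightarrow> poly_deg_lt m (f l)) \<Longrightarrow> poly_deg_lt m (\<lambda>x y. \<Sum>l\<in>S. f l x y)"
proof (induction S rule: infinite_finite_induct)
  case (insert l S)
  then show ?case using poly_deg_lt.add[of m "f l" "\<lambda>x y. \<Sum>l\<in>S. f l x y"] by simp
qed (simp_all add: poly_deg_lt.zero)

definition coord :: "nat \<Rightarrow> real \<Rightarrow> real \<Rightarrow> real" where
  "coord k x y = (if k = 1 then x else y)"

lemma poly_deg_lt_mult_coord:
  "poly_deg_lt m f \<Longrightarrow> poly_deg_lt (Suc m) (\<lambda>x y. coord k x y * f x y)"
proof (induction rule: poly_deg_lt.induct)
  case (monomial i j m c)
  show ?case
  proof (cases "k = 1")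
    case True
    then show ?thesis using poly_deg_lt.monomial[of "Suc i" j "Suc m" c] monomial
      by (simp add: coord_def algebra_simps)
  next
    case False
    then show ?thesis using poly_deg_lt.monomial[of i "Suc j" "Suc m" c] monomial
      by (simp add: coord_def algebra_simps)
  qed
next
  case (add m f g)
  then show ?case
    using poly_deg_lt.add[of "Suc m" "\<lambda>x y. coord k x y * f x y" "\<lambda>x y. coord k x y * g x y"]
    by (simp add: distrib_left)
qed (simp add: poly_deg_lt.zero)

lemma poly_deg_lt_mult_r2:
  assumes "poly_deg_lt m f"
  shows "poly_deg_lt (Suc (Suc m)) (\<lambda>x y. f x y * (x^2 + y^2))"
proof -
  have "poly_deg_lt (Suc (Suc m))
      (\<lambda>x y. coord 1 x y * (coord 1 x y * f x y) + coord 2 x y * (coord 2 x y * f x y))"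
    using assms by (intro poly_deg_lt.add poly_deg_lt_mult_coord)
  then show ?thesis by (simp add: coord_def power2_eq_square algebra_simps)
qed

lemma monic_vec_minus_leading:
  assumes "monic_vec n P" "i \<le> n"
  shows "poly_deg_lt n (\<lambda>x y. P i x y - x ^ (n - i) * y ^ i)"
proof -
  obtain c where c: "\<And>x y. P i x y = x ^ (n - i) * y ^ i +
      (\<Sum>j\<le>n. \<Sum>k\<le>n. if j + k < n then c i j k * x ^ j * y ^ k else 0)"
    using assms unfolding monic_vec_def by blast
  have "poly_deg_lt n (\<lambda>x y. \<Sum>j\<le>n. \<Sum>k\<le>n. if j + k < n then c i j k * x ^ j * y ^ k else 0)"
  proof (intro poly_deg_lt_sum)
    fix j k
    show "poly_deg_lt n (\<lambda>x y. if j + k < n then c i j k * x ^ j * y ^ k else 0)"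
      by (cases "j + k < n") (simp_all add: poly_deg_lt.monomial poly_deg_lt.zero)
  qed
  then show ?thesis by (simp add: c)
qed

lemma monic_vec_deg:
  assumes "monic_vec n P" "i \<le> n"
  shows "poly_deg_lt (Suc n) (P i)"
proof -
  have "poly_deg_lt (Suc n) (\<lambda>x y. (P i x y - x ^ (n - i) * y ^ i) + 1 * x ^ (n - i) * y ^ i)"
    using assms
    by (intro poly_deg_lt.add poly_deg_lt.monomial poly_deg_lt_mono[OF monic_vec_minus_leading]) auto
  then show ?thesis by simp
qed

lemma monic_vec_diff_deg:
  assumes "monic_vec n P" "monic_vec n P'" "i \<le> n"
  shows "poly_deg_lt n (\<lambda>x y. P i x y - P' i x y)"
  using poly_deg_lt_diff[OF monic_vec_minus_leading[OF assms(1,3)] monic_vec_minus_leading[OF assms(2,3)]]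
  by simp

lemma monic_vec_0: "monic_vec 0 P \<Longrightarrow> P 0 = (\<lambda>x y. 1)"
  unfolding monic_vec_def by auto

inductive span_below :: "(nat \<Rightarrow> nat \<Rightarrow> real \<Rightarrow> real \<Rightarrow> real) \<Rightarrow> nat \<Rightarrow> (real \<Rightarrow> real \<Rightarrow> real) \<Rightarrow> bool"
  for P where
  component: "k < m \<Longrightarrow> l \<le> k \<Longrightarrow> span_below P m (P k l)"
| zero: "span_below P m (\<lambda>x y. 0)"
| add: "span_below P m f \<Longrightarrow> span_below P m g \<Longrightarrow> span_below P m (\<lambda>x y. f x y + g x y)"
| cmult: "span_below P m f \<Longrightarrow> span_below P m (\<lambda>x y. c * f x y)"

lemma span_below_mono: "span_below P m f \<Longrightarrow> m \<le> m' \<Longrightarrow> span_below P m' f"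
  by (induction rule: span_below.induct) (auto intro: span_below.intros)

lemma span_below_lincomb:
  "(\<And>l. l \<in> S \<Longrightarrow> span_below P m (f l)) \<Longrightarrow> span_below P m (\<lambda>x y. \<Sum>l\<in>S. c l * f l x y)"
proof (induction S rule: infinite_finite_induct)
  case (insert l S)
  then show ?case
    using span_below.add[OF span_below.cmult[of P m "f l" "c l"], of "\<lambda>x y. \<Sum>l\<in>S. c l * f l x y"]
    by simp
qed (simp_all add: span_below.zero)

lemma ip_defined_span_below_left:
  assumes "span_below P m f" "\<And>k l. k < m \<Longrightarrow> l \<le> k \<Longrightarrow> ip_defined a b c s (P k l) g"
  shows "ip_defined a b c s f g"
  using assms by induction (simp_all add: ip_zero_left ip_add_left ip_cmult_left)

lemma ip_span_below_left_eq_0: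
  assumes "span_below P m f"
    and "\<And>k l. k < m \<Longrightarrow> l \<le> k \<Longrightarrow> ip_defined a b c s (P k l) g"
    and "\<And>k l. k < m \<Longrightarrow> l \<le> k \<Longrightarrow> ip a b c s (P k l) g = 0"
  shows "ip a b c s f g = 0"
  using assms
proof induction
  case (add m f g')
  then show ?case by (simp add: ip_add_left ip_defined_span_below_left)
next
  case (cmult m f k)
  then show ?case by (simp add: ip_cmult_left ip_defined_span_below_left)
qed (simp_all add: ip_zero_left)

lemma index_mult_mat_sum:
  "i < dim_row A \<Longrightarrow> j < dim_col B \<Longrightarrow> dim_col A = dim_row B \<Longrightarrow>
    (A * B) $$ (i, j) = (\<Sum>k<dim_col A. A $$ (i, k) * B $$ (k, j))"
  by (simp add: scalar_prod_def atLeast0LessThan)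

lemma Lmat_carrier: "Lmat r k \<in> carrier_mat r (Suc r)"
  by (simp add: Lmat_def)

lemma Hmat_carrier: "Hmat a b c s P n \<in> carrier_mat (Suc n) (Suc n)"
  by (simp add: Hmat_def)

lemma dim_Lmat [simp]: "dim_row (Lmat r k) = r" "dim_col (Lmat r k) = Suc r"
  by (simp_all add: Lmat_def)

lemma dim_Hmat [simp]: "dim_row (Hmat a b c s P n) = Suc n" "dim_col (Hmat a b c s P n) = Suc n"
  by (simp_all add: Hmat_def)

lemma Hmat_index: "i \<le> n \<Longrightarrow> j \<le> n \<Longrightarrow> Hmat a b c s P n $$ (i, j) = ip a b c s (P n i) (P n j)"
  by (simp add: Hmat_def)

lemma Vmat_mult:
  assumes "\<And>k. k \<in> {1, 2} \<Longrightarrow> E (Suc n) k \<in> carrier_mat (Suc (Suc n)) (Suc n)"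
    and "\<And>k. k \<in> {1, 2} \<Longrightarrow> E n k \<in> carrier_mat (Suc n) n"
    and "H \<in> carrier_mat (Suc n) (Suc n)"
  shows "Vmat E n * H =
    Lmat (Suc n) 1 * (E (Suc n) 1 * H) + Lmat (Suc n) 2 * (E (Suc n) 2 * H)
    + E n 1 * (Lmat n 1 * H) + E n 2 * (Lmat n 2 * H)"
proof -
  have carrier: "Lmat (Suc n) k * E (Suc n) k \<in> carrier_mat (Suc n) (Suc n)"
    "E n k * Lmat n k \<in> carrier_mat (Suc n) (Suc n)" if "k \<in> {1, 2}" for k
    using Lmat_carrier assms(1,2)[OF that] by (auto intro: mult_carrier_mat)
  have carrier': "Lmat (Suc n) k * (E (Suc n) k * H) \<in> carrier_mat (Suc n) (Suc n)"
    "E n k * (Lmat n k * H) \<in> carrier_mat (Suc n) (Suc n)" if "k \<in> {1, 2}" for k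
    using Lmat_carrier assms(1,2)[OF that] assms(3) by (auto intro: mult_carrier_mat)
  have assoc: "Lmat (Suc n) k * E (Suc n) k * H = Lmat (Suc n) k * (E (Suc n) k * H)"
    "E n k * Lmat n k * H = E n k * (Lmat n k * H)" if "k \<in> {1, 2}" for k
    using Lmat_carrier assms(1,2)[OF that] assms(3) by (auto intro: assoc_mult_mat)
  show ?thesis
    using carrier[of 1] carrier[of 2] carrier'[of 1] carrier'[of 2] assoc[of 1] assoc[of 2] assms(3)
    by (simp add: Vmat_def add_mult_distrib_mat[where nr = "Suc n" and n = "Suc n" and nc = "Suc n"])
qed

section \<open>Orthogonal polynomial systems with three-term relations\<close>

locale OPS_three_term =
  fixes a40 a22 a04 s :: real
    and P :: "nat \<Rightarrow> nat \<Rightarrow> real \<Rightarrow> real \<Rightarrow> real"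
    and E :: "nat \<Rightarrow> nat \<Rightarrow> real mat"
  assumes OPS: "monic_OPS a40 a22 a04 s P"
    and three_term: "three_term P E"
begin

lemma monic_vec_P: "monic_vec n (P n)"
  using OPS by (simp add: monic_OPS_def)

lemma P_deg: "i \<le> n \<Longrightarrow> poly_deg_lt (Suc n) (P n i)"
  by (rule monic_vec_deg[OF monic_vec_P])

lemma ip_defined_P_P: "i \<le> n \<Longrightarrow> j \<le> m \<Longrightarrow> ip_defined a40 a22 a04 s (P n i) (P m j)"
  using OPS by (simp add: monic_OPS_def)

lemma ip_P_P_eq_0: "n \<noteq> m \<Longrightarrow> i \<le> n \<Longrightarrow> j \<le> m \<Longrightarrow> ip a40 a22 a04 s (P n i) (P m j) = 0"
  using OPS by (simp add: monic_OPS_def)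

lemma E_carrier: "k \<in> {1, 2} \<Longrightarrow> E n k \<in> carrier_mat (Suc n) n"
  using three_term by (auto simp: three_term_def)

lemma dim_E: "k \<in> {1, 2} \<Longrightarrow> dim_row (E n k) = Suc n" "k \<in> {1, 2} \<Longrightarrow> dim_col (E n k) = n"
  using E_carrier by auto

lemma coord_mult_P:
  assumes "k \<in> {1, 2}" "i \<le> n"
  shows "(\<lambda>x y. coord k x y * P n i x y) =
    (\<lambda>x y. (\<Sum>j\<le>Suc n. Lmat (Suc n) k $$ (i, j) * P (Suc n) j x y)
      + (\<Sum>j<n. E n k $$ (i, j) * P (n - 1) j x y))"
  using three_term assms by (auto simp: three_term_def coord_def)

lemma span_below_mult_coord:
  assumes "k \<in> {1, 2}"
  shows "span_below P m f \<Longrightarrow> span_below P (Suc m) (\<lambda>x y. coord k x y * f x y)"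
proof (induction rule: span_below.induct)
  case (component k' m l)
  then show ?case
    unfolding coord_mult_P[OF assms component(2)]
    by (intro span_below.add span_below_lincomb span_below.component) auto
next
  case (add m f g)
  then show ?case
    using span_below.add[of P "Suc m" "\<lambda>x y. coord k x y * f x y" "\<lambda>x y. coord k x y * g x y"]
    by (simp add: distrib_left)
next
  case (cmult m f c)
  then show ?case
    using span_below.cmult[of P "Suc m" "\<lambda>x y. coord k x y * f x y" c] by (simp add: mult.left_commute)
qed (simp add: span_below.zero)

lemma span_below_monomial: "span_below P (Suc (i + j)) (\<lambda>x y. c * x ^ i * y ^ j)"
proof (induction i)
  case 0
  show ?case
  proof (induction j)
    case 0
    have "P 0 0 = (\<lambda>x y. 1)" by (rule monic_vec_0[OF monic_vec_P])
    then show ?case using span_below.cmult[OF span_below.component[of 0 1 0 P], of c] by simp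
  next
    case (Suc j)
    then show ?case using span_below_mult_coord[of 2, OF _ Suc] by (simp add: coord_def mult_ac)
  qed
next
  case (Suc i)
  then show ?case using span_below_mult_coord[of 1, OF _ Suc] by (simp add: coord_def mult_ac)
qed

lemma span_below_poly: "poly_deg_lt m f \<Longrightarrow> span_below P m f"
proof (induction rule: poly_deg_lt.induct)
  case (monomial i j m c)
  then show ?case using span_below_mono[OF span_below_monomial] by simp
qed (auto intro: span_below.intros)

lemma ip_defined_poly:
  assumes "poly_deg_lt m f" "poly_deg_lt m' g"
  shows "ip_defined a40 a22 a04 s f g"
proof -
  have "ip_defined a40 a22 a04 s (P k l) g" if "l \<le> k" for k l
    using span_below_poly[OF assms(2)] that
    by (subst ip_defined_commute) (auto intro: ip_defined_span_below_left ip_defined_P_P)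
  then show ?thesis by (auto intro: ip_defined_span_below_left[OF span_below_poly[OF assms(1)]])
qed

lemma ip_poly_P_eq_0: "poly_deg_lt n f \<Longrightarrow> i \<le> n \<Longrightarrow> ip a40 a22 a04 s f (P n i) = 0"
  by (rule ip_span_below_left_eq_0[OF span_below_poly]) (auto intro: ip_defined_P_P ip_P_P_eq_0)

lemma ip_coord_succ_P:
  assumes "k \<in> {1, 2}" "l \<le> Suc n" "j \<le> n"
  shows "ip a40 a22 a04 s (\<lambda>x y. coord k x y * P (Suc n) l x y) (P n j)
    = (E (Suc n) k * Hmat a40 a22 a04 s P n) $$ (l, j)"
proof -
  let ?ip = "ip a40 a22 a04 s"
  have "?ip (\<lambda>x y. coord k x y * P (Suc n) l x y) (P n j)
      = (\<Sum>m\<le>Suc (Suc n). Lmat (Suc (Suc n)) k $$ (l, m) * ?ip (P (Suc (Suc n)) m) (P n j))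
        + (\<Sum>m<Suc n. E (Suc n) k $$ (l, m) * ?ip (P n m) (P n j))"
    unfolding coord_mult_P[OF assms(1,2)] diff_Suc_1
    by (rule ip_add_lincombs_left) (use assms in \<open>auto intro: ip_defined_P_P\<close>)
  also have "\<dots> = (\<Sum>m<Suc n. E (Suc n) k $$ (l, m) * Hmat a40 a22 a04 s P n $$ (m, j))"
    using assms by (simp add: ip_P_P_eq_0 Hmat_index)
  also have "\<dots> = (E (Suc n) k * Hmat a40 a22 a04 s P n) $$ (l, j)"
    using assms by (subst index_mult_mat_sum) (simp_all add: dim_E)
  finally show ?thesis .
qed

lemma ip_coord_pred_P:
  assumes "k \<in> {1, 2}" "l < n" "j \<le> n"
  shows "ip a40 a22 a04 s (\<lambda>x y. coord k x y * P (n - 1) l x y) (P n j)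
    = (Lmat n k * Hmat a40 a22 a04 s P n) $$ (l, j)"
proof -
  let ?ip = "ip a40 a22 a04 s"
  have n: "Suc (n - 1) = n" and l: "l \<le> n - 1" using assms(2) by simp_all
  have "?ip (\<lambda>x y. coord k x y * P (n - 1) l x y) (P n j)
      = (\<Sum>m\<le>n. Lmat n k $$ (l, m) * ?ip (P n m) (P n j))
        + (\<Sum>m<n - 1. E (n - 1) k $$ (l, m) * ?ip (P (n - 1 - 1) m) (P n j))"
    unfolding coord_mult_P[OF assms(1) l] n
    by (rule ip_add_lincombs_left) (use assms in \<open>auto intro: ip_defined_P_P\<close>)
  also have "\<dots> = (\<Sum>m<Suc n. Lmat n k $$ (l, m) * Hmat a40 a22 a04 s P n $$ (m, j))"
    using assms by (simp add: ip_P_P_eq_0 Hmat_index lessThan_Suc_atMost)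
  also have "\<dots> = (Lmat n k * Hmat a40 a22 a04 s P n) $$ (l, j)"
    using assms by (subst index_mult_mat_sum) simp_all
  finally show ?thesis .
qed

lemma ip_coord_P_coord_P:
  assumes "k \<in> {1, 2}" "i \<le> n" "j \<le> n"
  defines "H \<equiv> Hmat a40 a22 a04 s P n"
  shows "ip a40 a22 a04 s (\<lambda>x y. coord k x y * P n i x y) (\<lambda>x y. coord k x y * P n j x y)
    = (Lmat (Suc n) k * (E (Suc n) k * H)) $$ (i, j) + (E n k * (Lmat n k * H)) $$ (i, j)"
proof -
  let ?ip = "ip a40 a22 a04 s"
  let ?g = "\<lambda>x y. coord k x y * P n j x y"
  have "?ip (\<lambda>x y. coord k x y * P n i x y) ?g
      = (\<Sum>l\<le>Suc n. Lmat (Suc n) k $$ (i, l) * ?ip (P (Suc n) l) ?g)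
        + (\<Sum>l<n. E n k $$ (i, l) * ?ip (P (n - 1) l) ?g)"
    unfolding coord_mult_P[OF assms(1,2)]
    by (rule ip_add_lincombs_left)
      (auto intro: ip_defined_poly[OF P_deg poly_deg_lt_mult_coord[OF P_deg[OF assms(3)]]])
  also have "\<dots> = (\<Sum>l<Suc (Suc n). Lmat (Suc n) k $$ (i, l) * (E (Suc n) k * H) $$ (l, j))
        + (\<Sum>l<n. E n k $$ (i, l) * (Lmat n k * H) $$ (l, j))"
  proof -
    have "?ip (P (Suc n) l) ?g = (E (Suc n) k * H) $$ (l, j)" if "l \<le> Suc n" for l
      using ip_coord_succ_P[OF assms(1) that assms(3)] by (simp add: ip_mult_swap H_def)
    moreover have "?ip (P (n - 1) l) ?g = (Lmat n k * H) $$ (l, j)" if "l < n" for l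
      using ip_coord_pred_P[OF assms(1) that assms(3)] by (simp add: ip_mult_swap H_def)
    ultimately show ?thesis
      unfolding lessThan_Suc_atMost by (intro arg_cong2[where f = "(+)"] sum.cong) auto
  qed
  also have "\<dots> = (Lmat (Suc n) k * (E (Suc n) k * H)) $$ (i, j) + (E n k * (Lmat n k * H)) $$ (i, j)"
    using assms by (subst (1 2) index_mult_mat_sum) (simp_all add: H_def dim_E)
  finally show ?thesis .
qed

lemma ip_r2_P_P:
  assumes "i \<le> n" "j \<le> n"
  shows "ip a40 a22 a04 s (\<lambda>x y. P n i x y * (x^2 + y^2)) (P n j)
    = (Vmat E n * Hmat a40 a22 a04 s P n) $$ (i, j)"
proof -
  let ?ip = "ip a40 a22 a04 s"
  let ?cP = "\<lambda>k m x y. coord k x y * P n m x y"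
  have "(\<lambda>x y. P n i x y * (x^2 + y^2))
      = (\<lambda>x y. coord 1 x y * ?cP 1 i x y + coord 2 x y * ?cP 2 i x y)"
    by (simp add: coord_def power2_eq_square algebra_simps)
  then have "?ip (\<lambda>x y. P n i x y * (x^2 + y^2)) (P n j)
      = ?ip (\<lambda>x y. coord 1 x y * ?cP 1 i x y) (P n j) + ?ip (\<lambda>x y. coord 2 x y * ?cP 2 i x y) (P n j)"
    using assms
    by (simp only:) (intro ip_add_left(2) ip_defined_poly[OF
        poly_deg_lt_mult_coord[OF poly_deg_lt_mult_coord[OF P_deg]] P_deg])
  also have "\<dots> = ?ip (?cP 1 i) (?cP 1 j) + ?ip (?cP 2 i) (?cP 2 j)"
    by (simp only: ip_mult_swap)
  also have "\<dots> = (Vmat E n * Hmat a40 a22 a04 s P n) $$ (i, j)"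
  proof -
    have "Vmat E n * Hmat a40 a22 a04 s P n =
        Lmat (Suc n) 1 * (E (Suc n) 1 * Hmat a40 a22 a04 s P n)
        + Lmat (Suc n) 2 * (E (Suc n) 2 * Hmat a40 a22 a04 s P n)
        + E n 1 * (Lmat n 1 * Hmat a40 a22 a04 s P n) + E n 2 * (Lmat n 2 * Hmat a40 a22 a04 s P n)"
      by (rule Vmat_mult) (simp_all add: E_carrier Hmat_carrier)
    then show ?thesis using assms by (simp add: ip_coord_P_coord_P dim_E add_ac)
  qed
  finally show ?thesis .
qed

end

section \<open>Differentiability of the Gram matrices\<close>

context
  fixes a40 a22 a04 s t \<delta> :: real
    and Ps Pt Pd :: "nat \<Rightarrow> nat \<Rightarrow> real \<Rightarrow> real \<Rightarrow> real"
    and Es Et Ed :: "nat \<Rightarrow> nat \<Rightarrow> real mat"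
  assumes Ps: "OPS_three_term a40 a22 a04 s Ps Es"
    and Pt: "OPS_three_term a40 a22 a04 t Pt Et"
    and Pd: "OPS_three_term a40 a22 a04 (t + \<delta>) Pd Ed"
    and near: "\<bar>s - t\<bar> \<le> \<delta>"
begin

interpretation S: OPS_three_term a40 a22 a04 s Ps Es by (fact Ps)
interpretation T: OPS_three_term a40 a22 a04 t Pt Et by (fact Pt)
interpretation D: OPS_three_term a40 a22 a04 "t + \<delta>" Pd Ed by (fact Pd)

lemma ip_P_diff_self_le:
  assumes "i \<le> n"
  shows "ip a40 a22 a04 s (\<lambda>x y. Pt n i x y - Ps n i x y) (\<lambda>x y. Pt n i x y - Ps n i x y)
    \<le> (s - t)^2 * ip a40 a22 a04 (t + \<delta>)
        (\<lambda>x y. Pt n i x y * (x^2 + y^2)) (\<lambda>x y. Pt n i x y * (x^2 + y^2))"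
proof -
  define \<alpha> where "\<alpha> = (\<lambda>x y. Pt n i x y - Ps n i x y)"
  have deg_\<alpha>: "poly_deg_lt n \<alpha>"
    unfolding \<alpha>_def using assms by (intro monic_vec_diff_deg T.monic_vec_P S.monic_vec_P)
  have deg_Pt: "poly_deg_lt (Suc n) (Pt n i)" using assms by (rule T.P_deg)
  have deg_Ps: "poly_deg_lt (Suc n) (Ps n i)" using assms by (rule S.P_deg)
  have "ip a40 a22 a04 s (Pt n i) \<alpha> = ip a40 a22 a04 s (\<lambda>x y. Ps n i x y + \<alpha> x y) \<alpha>"
    by (simp add: \<alpha>_def)
  also have "\<dots> = ip a40 a22 a04 s (Ps n i) \<alpha> + ip a40 a22 a04 s \<alpha> \<alpha>"
    using deg_Ps deg_\<alpha> by (intro ip_add_left S.ip_defined_poly)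
  also have "ip a40 a22 a04 s (Ps n i) \<alpha> = 0"
    using S.ip_poly_P_eq_0[OF deg_\<alpha> assms] by (simp add: ip_commute)
  finally have "ip a40 a22 a04 s (Pt n i) \<alpha> = ip a40 a22 a04 s \<alpha> \<alpha>" by simp
  moreover have "ip a40 a22 a04 t (Pt n i) \<alpha> = 0"
    using T.ip_poly_P_eq_0[OF deg_\<alpha> assms] by (simp add: ip_commute)
  ultimately show ?thesis
    unfolding \<alpha>_def[symmetric]
    using deg_Pt deg_\<alpha> poly_deg_lt_mult_r2[OF deg_Pt]
    by (intro ip_self_le_of_orth near S.ip_defined_poly T.ip_defined_poly D.ip_defined_poly)
qed

lemma Hmat_remainder_le:
  assumes "i \<le> n" "j \<le> n"
  defines "rA \<equiv> \<lambda>x y. Pt n i x y * (x^2 + y^2)" and "rB \<equiv> \<lambda>x y. Pt n j x y * (x^2 + y^2)"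
  shows "\<bar>Hmat a40 a22 a04 s Ps n $$ (i, j) - Hmat a40 a22 a04 t Pt n $$ (i, j)
      - (s - t) * ip a40 a22 a04 t rA (Pt n j)\<bar>
    \<le> (ip a40 a22 a04 (t + \<delta>) rA rA + ip a40 a22 a04 (t + \<delta>) rB rB) * (s - t)^2"
proof -
  let ?ip = "ip a40 a22 a04"
  define \<alpha> where "\<alpha> = (\<lambda>x y. Pt n i x y - Ps n i x y)"
  define \<beta> where "\<beta> = (\<lambda>x y. Pt n j x y - Ps n j x y)"
  have deg: "poly_deg_lt (Suc n) (Pt n i)" "poly_deg_lt (Suc n) (Pt n j)"
    "poly_deg_lt (Suc n) (Ps n i)" "poly_deg_lt (Suc n) (Ps n j)"
    using assms by (simp_all add: S.P_deg T.P_deg)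
  have deg_diff: "poly_deg_lt n \<alpha>" "poly_deg_lt n \<beta>"
    unfolding \<alpha>_def \<beta>_def using assms by (intro monic_vec_diff_deg T.monic_vec_P S.monic_vec_P; simp)+
  have "Pt n i = (\<lambda>x y. Ps n i x y + \<alpha> x y)" "Pt n j = (\<lambda>x y. Ps n j x y + \<beta> x y)"
    by (simp_all add: \<alpha>_def \<beta>_def)
  then have "?ip s (Pt n i) (Pt n j)
      = ?ip s (Ps n i) (Ps n j) + ?ip s \<alpha> (Ps n j) + ?ip s (Ps n i) \<beta> + ?ip s \<alpha> \<beta>"
    using deg deg_diff by (simp only:) (intro ip_add_add S.ip_defined_poly)
  moreover have "?ip s \<alpha> (Ps n j) = 0" "?ip s (Ps n i) \<beta> = 0"
    using S.ip_poly_P_eq_0 deg_diff assms by (simp_all add: ip_commute[of _ _ _ s "Ps n i"])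
  ultimately have H_s: "?ip s (Ps n i) (Ps n j) = ?ip s (Pt n i) (Pt n j) - ?ip s \<alpha> \<beta>"
    by simp
  let ?T = "?ip s (Pt n i) (Pt n j) - ?ip t (Pt n i) (Pt n j) - (s - t) * ?ip t rA (Pt n j)"
  let ?a = "?ip (t + \<delta>) rA rA" and ?b = "?ip (t + \<delta>) rB rB"
  have taylor: "\<bar>?T\<bar> \<le> (s - t)^2 / 2 * (?a + ?b)"
    unfolding rA_def rB_def
    using deg poly_deg_lt_mult_r2[OF deg(1)] poly_deg_lt_mult_r2[OF deg(2)]
    by (intro ip_taylor_le near S.ip_defined_poly T.ip_defined_poly D.ip_defined_poly) assumption+
  have cross: "\<bar>?ip s \<alpha> \<beta>\<bar> \<le> (?ip s \<alpha> \<alpha> + ?ip s \<beta> \<beta>) / 2"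
    using deg_diff by (intro abs_ip_le S.ip_defined_poly)
  have self: "?ip s \<alpha> \<alpha> \<le> (s - t)^2 * ?a" "?ip s \<beta> \<beta> \<le> (s - t)^2 * ?b"
    using ip_P_diff_self_le assms(1,2) by (simp_all add: \<alpha>_def \<beta>_def rA_def rB_def)
  have "\<bar>Hmat a40 a22 a04 s Ps n $$ (i, j) - Hmat a40 a22 a04 t Pt n $$ (i, j)
      - (s - t) * ?ip t rA (Pt n j)\<bar> = \<bar>?T - ?ip s \<alpha> \<beta>\<bar>"
    by (simp add: H_s Hmat_index[OF assms(1,2)] algebra_simps)
  also have "\<dots> \<le> \<bar>?T\<bar> + \<bar>?ip s \<alpha> \<beta>\<bar>" by (rule abs_triangle_ineq4)
  also have "\<dots> \<le> (s - t)^2 / 2 * (?a + ?b) + ((s - t)^2 * ?a + (s - t)^2 * ?b) / 2"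
    using self by (intro add_mono[OF taylor order_trans[OF cross]] divide_right_mono add_mono) auto
  also have "\<dots> = (?a + ?b) * (s - t)^2" by (simp add: field_simps)
  finally show ?thesis .
qed

end

lemma Hmat_has_real_derivative:
  assumes "\<delta> > 0" and OPS: "\<And>s. \<bar>s - t\<bar> \<le> \<delta> \<Longrightarrow> OPS_three_term a40 a22 a04 s (Q s) (E s)"
    and ij: "i \<le> n" "j \<le> n"
  defines "rQ \<equiv> \<lambda>k x y. Q t n k x y * (x^2 + y^2)"
  shows "((\<lambda>s. Hmat a40 a22 a04 s (Q s) n $$ (i, j)) has_real_derivative
    ip a40 a22 a04 t (rQ i) (Q t n j)) (at t)"
proof (rule has_real_derivative_if_quadratic_remainder[OF \<open>\<delta> > 0\<close>])
  fix s assume near: "\<bar>s - t\<bar> \<le> \<delta>"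
  have "OPS_three_term a40 a22 a04 t (Q t) (E t)" "OPS_three_term a40 a22 a04 (t + \<delta>) (Q (t + \<delta>)) (E (t + \<delta>))"
    using OPS \<open>\<delta> > 0\<close> by simp_all
  then show "\<bar>Hmat a40 a22 a04 s (Q s) n $$ (i, j) - Hmat a40 a22 a04 t (Q t) n $$ (i, j)
      - (s - t) * ip a40 a22 a04 t (rQ i) (Q t n j)\<bar>
    \<le> (ip a40 a22 a04 (t + \<delta>) (rQ i) (rQ i) + ip a40 a22 a04 (t + \<delta>) (rQ j) (rQ j)) * (s - t)^2"
    unfolding rQ_def by (rule Hmat_remainder_le[OF OPS[OF near] _ _ near ij])
qed

theorem lemma6p1:
  fixes a40 a22 a04 :: real
    and Q :: "real \<Rightarrow> nat \<Rightarrow> nat \<Rightarrow> real \<Rightarrow> real \<Rightarrow> real"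
    and E :: "real \<Rightarrow> nat \<Rightarrow> nat \<Rightarrow> real mat"
    and U :: "real set" and t :: real and n :: nat
  assumes "a40 \<ge> 0" "a22 \<ge> 0" "a04 \<ge> 0" "a40 + a22 > 0" "a22 + a04 > 0"
    and "open U" and "t \<in> U"
    and "\<And>s. s \<in> U \<Longrightarrow> monic_OPS a40 a22 a04 s (Q s)"
    and "\<And>s. s \<in> U \<Longrightarrow> three_term (Q s) (E s)"
  shows "\<forall>i\<le>n. \<forall>j\<le>n.
           ((\<lambda>s. Hmat a40 a22 a04 s (Q s) n $$ (i, j)) has_real_derivative
              (Vmat (E t) n * Hmat a40 a22 a04 t (Q t) n) $$ (i, j)) (at t)"
proof (intro allI impI)
  \<comment> \<open>The sign conditions on the coefficients go unused: integrability is part of \<open>monic_OPS\<close>.\<close>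
  fix i j assume ij: "i \<le> n" "j \<le> n"
  have OPS: "OPS_three_term a40 a22 a04 s (Q s) (E s)" if "s \<in> U" for s
    using assms(8,9) that by unfold_locales
  obtain \<delta> where "\<delta> > 0" "cball t \<delta> \<subseteq> U" using assms(6,7) open_contains_cball by blast
  then have OPS_near: "OPS_three_term a40 a22 a04 s (Q s) (E s)" if "\<bar>s - t\<bar> \<le> \<delta>" for s
    using that by (intro OPS subsetD[OF \<open>cball t \<delta> \<subseteq> U\<close>]) (simp add: dist_real_def abs_minus_commute)
  from Hmat_has_real_derivative[where t = t, OF \<open>\<delta> > 0\<close> OPS_near ij]
  show "((\<lambda>s. Hmat a40 a22 a04 s (Q s) n $$ (i, j)) has_real_derivative
      (Vmat (E t) n * Hmat a40 a22 a04 t (Q t) n) $$ (i, j)) (at t)"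
    by (simp add: OPS_three_term.ip_r2_P_P[OF OPS[OF assms(7)] ij])
qed

end
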